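(* Define $\kappa_4(\vec c)=\frac{\sum_j c_j^4}{\left(\sum_j c_j^2\right)^2}$ for nonzero $\vec c\in\mathbb{R}_{\ge0}^N$. For every nonzero $\vec c=(c_1,\dots,c_N)\in\mathbb{R}_{\ge0}^N$ whose entries are not all equal and every real $\alpha>0$, $\kappa_4(c_1+\alpha,\dots,c_N+\alpha)<\kappa_4(\vec c)$. *)

theory Defs
  imports Complex_Main
begin

text \<open>Vectors in R^N are represented as functions nat => real restricted to indices 0..N-1.\<close>

definition kappa4 :: "nat \<Rightarrow> (nat \<Rightarrow> real) \<Rightarrow> real" where
  "kappa4 N c = (\<Sum>j<N. c j ^ 4) / (\<Sum>j<N. c j ^ 2)^2"

end

theory Submission
  imports Defs
begin

text \<open>Write \<open>S k = \<Sum>j. c\<^sub>j\<^sup>k\<close>, so \<open>S 0 = N\<close>. Expanding the shifted power sums binomially,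
  \<open>S 4 (S 2 + 2\<alpha> S 1 + \<alpha>\<^sup>2 S 0)\<^sup>2 - (S 4 + 4\<alpha> S 3 + 6\<alpha>\<^sup>2 S 2 + 4\<alpha>\<^sup>3 S 1 + \<alpha>\<^sup>4 S 0) S 2\<^sup>2\<close> is a polynomial
  in \<open>\<alpha>\<close> whose coefficients are nonnegative combinations of \<open>S 1 S 4 - S 2 S 3\<close>, \<open>S 1 S 3 - S 2\<^sup>2\<close>
  and \<open>S 0 S 4 - S 2\<^sup>2\<close>. These are Chebyshev-type inequalities \<open>S (a + d) S b \<le> S a S (b + d)\<close>
  for \<open>a \<le> b\<close>: symmetrising the double sum, each pair \<open>(x, y)\<close> contributes
  \<open>(x\<^sup>d - y\<^sup>d)(x\<^sup>b y\<^sup>a - x\<^sup>a y\<^sup>b) \<ge> 0\<close>, strictly for \<open>a = 0\<close> and \<open>x \<noteq> y\<close>. The \<open>\<alpha>\<^sup>4\<close> coefficient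
  \<open>S 0 (S 0 S 4 - S 2\<^sup>2)\<close> is positive because the entries are not all equal.\<close>

definition power_sum :: "'a set \<Rightarrow> ('a \<Rightarrow> real) \<Rightarrow> nat \<Rightarrow> real" where
  "power_sum A c k = (\<Sum>j\<in>A. c j ^ k)"

lemma power_sum_0 [simp]: "power_sum A c 0 = real (card A)"
  by (simp add: power_sum_def)

lemma power_sum_mult: "power_sum A c a * power_sum A c b = (\<Sum>i\<in>A. \<Sum>j\<in>A. c i ^ a * c j ^ b)"
  by (simp add: power_sum_def sum_product)

lemma power_sum_shift:
  "power_sum A (\<lambda>j. c j + \<alpha>) n = (\<Sum>k\<le>n. of_nat (n choose k) * \<alpha> ^ (n - k) * power_sum A c k)"
  unfolding power_sum_def
  by (simp add: binomial_ring sum_distrib_left sum.swap[of _ A] mult_ac)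

lemma sum_sum_symmetrize:
  fixes f :: "'a \<Rightarrow> 'a \<Rightarrow> 'b :: linordered_idom"
  shows "2 * (\<Sum>i\<in>A. \<Sum>j\<in>A. f i j) = (\<Sum>i\<in>A. \<Sum>j\<in>A. f i j + f j i)"
  by (simp add: sum.distrib sum.swap[of "\<lambda>i j. f j i"])

lemma sum_sum_nonneg_symmetric:
  fixes f :: "'a \<Rightarrow> 'a \<Rightarrow> 'b :: linordered_idom"
  assumes "\<And>i j. i \<in> A \<Longrightarrow> j \<in> A \<Longrightarrow> 0 \<le> f i j + f j i"
  shows "0 \<le> (\<Sum>i\<in>A. \<Sum>j\<in>A. f i j)"
proof -
  have "0 \<le> (\<Sum>i\<in>A. \<Sum>j\<in>A. f i j + f j i)"
    using assms by (intro sum_nonneg) auto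
  then show ?thesis
    by (simp add: sum_sum_symmetrize[symmetric] zero_le_mult_iff)
qed

lemma sum_sum_pos_symmetric:
  fixes f :: "'a \<Rightarrow> 'a \<Rightarrow> 'b :: linordered_idom"
  assumes "finite A" "i0 \<in> A" "j0 \<in> A" "0 < f i0 j0 + f j0 i0"
    and "\<And>i j. i \<in> A \<Longrightarrow> j \<in> A \<Longrightarrow> 0 \<le> f i j + f j i"
  shows "0 < (\<Sum>i\<in>A. \<Sum>j\<in>A. f i j)"
proof -
  have "0 < (\<Sum>j\<in>A. f i0 j + f j i0)"
    using assms by (intro sum_pos2[of _ j0]) auto
  then have "0 < (\<Sum>i\<in>A. \<Sum>j\<in>A. f i j + f j i)"
    using assms by (intro sum_pos2[of A i0 "\<lambda>i. \<Sum>j\<in>A. f i j + f j i"]) (auto intro: sum_nonneg)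
  then show ?thesis
    by (simp add: sum_sum_symmetrize[symmetric] zero_less_mult_iff)
qed

lemma chebyshev_pair_factor:
  fixes x y :: "'a :: comm_ring_1"
  shows "x ^ a * y ^ (b + d) + y ^ a * x ^ (b + d) - (x ^ (a + d) * y ^ b + y ^ (a + d) * x ^ b)
       = (x ^ d - y ^ d) * (x ^ b * y ^ a - x ^ a * y ^ b)"
  by (simp add: power_add algebra_simps)

lemma chebyshev_pair_nonneg:
  fixes x y :: "'a :: linordered_idom"
  assumes "0 \<le> x" "0 \<le> y" "a \<le> b"
  shows "x ^ (a + d) * y ^ b + y ^ (a + d) * x ^ b \<le> x ^ a * y ^ (b + d) + y ^ a * x ^ (b + d)"
proof -
  have same_sign: "0 \<le> (u ^ d - v ^ d) * (u ^ b * v ^ a - u ^ a * v ^ b)"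
    if "0 \<le> v" "v \<le> u" for u v :: 'a
  proof -
    have "u ^ b * v ^ a - u ^ a * v ^ b = u ^ a * v ^ a * (u ^ (b - a) - v ^ (b - a))"
      using \<open>a \<le> b\<close> by (simp add: algebra_simps flip: power_add)
    also have "\<dots> \<ge> 0"
      using that by (simp add: power_mono)
    finally show ?thesis
      using that by (simp add: power_mono)
  qed
  have "0 \<le> (x ^ d - y ^ d) * (x ^ b * y ^ a - x ^ a * y ^ b)"
  proof (cases "y \<le> x")
    case True
    then show ?thesis using same_sign assms by blast
  next
    case False
    then show ?thesis
      using same_sign[of x y] assms by (simp add: algebra_simps)
  qed
  then show ?thesis
    using chebyshev_pair_factor[of x a y b d] by simp
qed

lemma chebyshev_pair_pos:
  fixes x y :: "'a :: linordered_idom"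
  assumes "0 \<le> x" "0 \<le> y" "x \<noteq> y" "0 < b" "0 < d"
  shows "x ^ d * y ^ b + y ^ d * x ^ b < y ^ (b + d) + x ^ (b + d)"
proof -
  have same_sign: "0 < (u ^ d - v ^ d) * (u ^ b - v ^ b)" if "0 \<le> v" "v < u" for u v :: 'a
    using that assms by (simp add: power_strict_mono)
  have "0 < (x ^ d - y ^ d) * (x ^ b - y ^ b)"
  proof (cases "y < x")
    case False
    then have "x < y" using assms by simp
    then show ?thesis
      using same_sign[of x y] assms by (simp add: algebra_simps)
  qed (use same_sign assms in simp)
  then show ?thesis
    using chebyshev_pair_factor[of x 0 y b d] by simp
qed

lemma power_sum_chebyshev:
  assumes "\<And>j. j \<in> A \<Longrightarrow> 0 \<le> c j" "a \<le> b"
  shows "power_sum A c (a + d) * power_sum A c b \<le> power_sum A c a * power_sum A c (b + d)"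
proof -
  have "power_sum A c a * power_sum A c (b + d) - power_sum A c (a + d) * power_sum A c b
      = (\<Sum>i\<in>A. \<Sum>j\<in>A. c i ^ a * c j ^ (b + d) - c i ^ (a + d) * c j ^ b)"
    by (simp add: power_sum_mult sum_subtractf)
  also have "\<dots> \<ge> 0"
  proof (rule sum_sum_nonneg_symmetric)
    fix i j assume "i \<in> A" "j \<in> A"
    then show "0 \<le> c i ^ a * c j ^ (b + d) - c i ^ (a + d) * c j ^ b
                  + (c j ^ a * c i ^ (b + d) - c j ^ (a + d) * c i ^ b)"
      using chebyshev_pair_nonneg[of "c i" "c j" a b d] assms by simp
  qed
  finally show ?thesis by simp
qed

lemma power_sum_chebyshev_strict:
  assumes "finite A" "\<And>j. j \<in> A \<Longrightarrow> 0 \<le> c j"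
    and "i0 \<in> A" "j0 \<in> A" "c i0 \<noteq> c j0" "0 < b" "0 < d"
  shows "power_sum A c d * power_sum A c b < real (card A) * power_sum A c (b + d)"
proof -
  have "real (card A) * power_sum A c (b + d) - power_sum A c d * power_sum A c b
      = (\<Sum>i\<in>A. \<Sum>j\<in>A. c j ^ (b + d) - c i ^ d * c j ^ b)"
    using power_sum_mult[of A c 0 "b + d"] by (simp add: power_sum_mult sum_subtractf)
  also have "\<dots> > 0"
  proof (rule sum_sum_pos_symmetric[OF \<open>finite A\<close> \<open>i0 \<in> A\<close> \<open>j0 \<in> A\<close>])
    show "0 < c j0 ^ (b + d) - c i0 ^ d * c j0 ^ b + (c i0 ^ (b + d) - c j0 ^ d * c i0 ^ b)"
      using chebyshev_pair_pos[of "c i0" "c j0" b d] assms by simp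
  next
    fix i j assume "i \<in> A" "j \<in> A"
    then show "0 \<le> c j ^ (b + d) - c i ^ d * c j ^ b + (c i ^ (b + d) - c j ^ d * c i ^ b)"
      using chebyshev_pair_pos[of "c i" "c j" b d] assms by (cases "c i = c j") (simp_all add: power_add)
  qed
  finally show ?thesis by simp
qed

lemma fourth_moment_ratio_shift_less:
  fixes s0 s1 s2 s3 s4 \<alpha> :: real
  assumes "0 < \<alpha>" "0 < s0" "0 \<le> s1" "0 < s2"
    and "s2 * s3 \<le> s1 * s4" "s2 * s2 \<le> s1 * s3" "s2 * s2 < s0 * s4"
  shows "(s4 + 4 * \<alpha> * s3 + 6 * \<alpha>^2 * s2 + 4 * \<alpha>^3 * s1 + \<alpha>^4 * s0)
           / (s2 + 2 * \<alpha> * s1 + \<alpha>^2 * s0)^2 < s4 / s2^2"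
proof -
  define L where "L = s2 + 2 * \<alpha> * s1 + \<alpha>^2 * s0"
  have "L > 0" unfolding L_def using assms by (simp add: add_pos_nonneg)
  have "0 \<le> s1 * (s1 * s4 - s2 * s3) + s2 * (s1 * s3 - s2 * s2)"
    using assms by simp
  then have cubic: "s2 ^ 3 \<le> s1 ^ 2 * s4"
    by (simp add: algebra_simps power2_eq_square power3_eq_cube)
  have "s4 * L^2 - (s4 + 4 * \<alpha> * s3 + 6 * \<alpha>^2 * s2 + 4 * \<alpha>^3 * s1 + \<alpha>^4 * s0) * s2^2
     = \<alpha> * (4 * s2 * (s1 * s4 - s2 * s3))
     + \<alpha>^2 * (4 * (s1^2 * s4 - s2^3) + 2 * s2 * (s0 * s4 - s2 * s2))
     + \<alpha>^3 * (4 * s1 * (s0 * s4 - s2 * s2))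
     + \<alpha>^4 * (s0 * (s0 * s4 - s2 * s2))"
    unfolding L_def by (simp add: algebra_simps power2_eq_square power3_eq_cube power4_eq_xxxx)
  also have "\<dots> > 0"
    using assms cubic by (intro add_nonneg_pos add_nonneg_nonneg) simp_all
  finally show ?thesis
    using \<open>L > 0\<close> \<open>0 < s2\<close> by (simp add: L_def divide_less_eq less_divide_eq mult.commute)
qed

theorem theorem13:
  fixes N :: nat and c :: "nat \<Rightarrow> real" and \<alpha> :: real
  assumes nonneg: "\<forall>j<N. c j \<ge> 0"
    and nonzero: "\<exists>j<N. c j \<noteq> 0"
    and not_all_equal: "\<exists>i<N. \<exists>j<N. c i \<noteq> c j"
    and alpha_pos: "\<alpha> > 0"
  shows "kappa4 N (\<lambda>j. c j + \<alpha>) < kappa4 N c"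
proof -
  define S where "S = power_sum {..<N} c"
  have kappa4_eq: "kappa4 N f = power_sum {..<N} f 4 / power_sum {..<N} f 2 ^ 2" for f
    by (simp add: kappa4_def power_sum_def)
  have shift4: "power_sum {..<N} (\<lambda>j. c j + \<alpha>) 4
      = S 4 + 4 * \<alpha> * S 3 + 6 * \<alpha>^2 * S 2 + 4 * \<alpha>^3 * S 1 + \<alpha>^4 * S 0"
    and shift2: "power_sum {..<N} (\<lambda>j. c j + \<alpha>) 2 = S 2 + 2 * \<alpha> * S 1 + \<alpha>^2 * S 0"
    unfolding power_sum_shift S_def by (simp_all add: numeral_eq_Suc atMost_Suc algebra_simps)
  obtain i0 j0 where ij: "i0 < N" "j0 < N" "c i0 \<noteq> c j0" using not_all_equal by blast
  obtain k0 where k0: "k0 < N" "c k0 \<noteq> 0" using nonzero by blast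
  have "0 < S 2" unfolding S_def power_sum_def
    using k0 by (intro sum_pos2[of _ k0]) auto
  moreover have "0 \<le> S 1" unfolding S_def power_sum_def
    using nonneg by (intro sum_nonneg) auto
  moreover have "S 2 * S 3 \<le> S 1 * S 4" "S 2 * S 2 \<le> S 1 * S 3"
    using power_sum_chebyshev[of "{..<N}" c 1 3 1] power_sum_chebyshev[of "{..<N}" c 1 2 1] nonneg
    by (simp_all add: S_def flip: numeral_2_eq_2)
  moreover have "S 2 * S 2 < S 0 * S 4"
    using power_sum_chebyshev_strict[of "{..<N}" c i0 j0 2 2] nonneg ij by (simp add: S_def)
  moreover have "0 < S 0" using ij by (simp add: S_def)
  ultimately show ?thesis
    using fourth_moment_ratio_shift_less alpha_pos
    by (simp add: kappa4_eq shift4 shift2 flip: S_def)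
qed

end
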